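(* Let $n\ge1$, $D\ge1$, $r=\lceil\sqrt n\rceil$, and let $X_n=\{\mathbf{x}^0,\ldots,\mathbf{x}^{n-1}\}\subseteq\{0,1\}^D$ consist of $n$ pairwise distinct vectors, indexed so that $\mathbf{a}\cdot\mathbf{x}^0<\cdots<\mathbf{a}\cdot\mathbf{x}^{n-1}$ for some $\mathbf{a}\in\mathbb{Z}^D$. Then there is a five-layer Boolean threshold network with layer sizes $D$, $r+D$, $2r$, $rD$, $D$ that is a perfect autoencoder for $X_n$, with the third layer (of size $2r$) as middle layer.
   Context: A Boolean threshold function is a map $\{0,1\}^h\to\{0,1\}$, $\mathbf{u}\mapsto[\mathbf{w}\cdot\mathbf{u}\ge\theta]$ (value $1$ iff $\mathbf{w}\cdot\mathbf{u}\ge\theta$) with $\mathbf{w}\in\mathbb{Z}^h,\theta\in\mathbb{Z}$. An $L$-layer Boolean threshold network has layers $1,\ldots,L$; layer $1$ is the input; each node of layer $t+1$ computes a Boolean threshold function of the values of layer $t$. If layer $k$ is designated the middle layer, the encoder $\mathbf{f}$ is the map from layer $1$ values to layer $k$ values and the decoder $\mathbf{g}$ the map from layer $k$ values to layer $L$ values; the network is a perfect autoencoder for $X_n$ if $\mathbf{g}(\mathbf{f}(\mathbf{x}^i))=\mathbf{x}^i$ for all $i$. *)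

theory Defs
  imports Complex_Main
begin

text \<open>Boolean vectors in {0,1}^h are represented as bool lists of length h;
  True stands for 1 and False for 0.\<close>

definition bit :: "bool \<Rightarrow> int" where
  "bit b = (if b then 1 else 0)"

definition bdot :: "(nat \<Rightarrow> int) \<Rightarrow> bool list \<Rightarrow> int" where
  "bdot w u = (\<Sum>i<length u. w i * bit (u ! i))"

definition threshold_fn :: "(nat \<Rightarrow> int) \<Rightarrow> int \<Rightarrow> bool list \<Rightarrow> bool" where
  "threshold_fn w \<theta> u = (bdot w u \<ge> \<theta>)"

text \<open>A layer transition: (W, \<Theta>, m) maps the previous layer to m nodes, node j
  computing the threshold function with weight vector W j and threshold \<Theta> j.\<close>
type_synonym layer = "(nat \<Rightarrow> nat \<Rightarrow> int) \<times> (nat \<Rightarrow> int) \<times> nat"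

definition layer_size :: "layer \<Rightarrow> nat" where
  "layer_size l = snd (snd l)"

definition apply_layer :: "layer \<Rightarrow> bool list \<Rightarrow> bool list" where
  "apply_layer l u = (case l of (W, \<Theta>, m) \<Rightarrow> map (\<lambda>j. threshold_fn (W j) (\<Theta> j) u) [0..<m])"

text \<open>A network with L layers is given by the list of its L-1 transitions;
  layer 1 is the input.  Evaluating a list of transitions:\<close>
definition net_eval :: "layer list \<Rightarrow> bool list \<Rightarrow> bool list" where
  "net_eval N u = fold apply_layer N u"

text \<open>With layer k (1-based) as middle layer, the encoder consists of the first k-1
  transitions and the decoder of the remaining ones.\<close>
definition encoder :: "layer list \<Rightarrow> nat \<Rightarrow> bool list \<Rightarrow> bool list" where
  "encoder N k = net_eval (take (k - 1) N)"

definition decoder :: "layer list \<Rightarrow> nat \<Rightarrow> bool list \<Rightarrow> bool list" where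
  "decoder N k = net_eval (drop (k - 1) N)"

definition perfect_autoencoder :: "layer list \<Rightarrow> nat \<Rightarrow> bool list set \<Rightarrow> bool" where
  "perfect_autoencoder N k X = (\<forall>x\<in>X. decoder N k (encoder N k x) = x)"

end

theory Submission
  imports Defs
begin

text \<open>Extend the scores \<open>t i = a \<cdot> x i\<close> to a strictly increasing \<open>T : \<nat> \<Rightarrow> \<int>\<close>
  and write \<open>i = P r + s\<close> with \<open>P, s < r\<close>, which is possible because \<open>n \<le> r\<^sup>2\<close>.
  Comparing \<open>a \<cdot> x\<close> with the thresholds \<open>T (k r)\<close> gives the unary code \<open>[k \<le> P]\<^sub>k\<close>.
  A node reading a unary code \<open>[k \<le> s]\<^sub>k\<close> with the backward differences of a function
  \<open>h\<close> as weights computes \<open>h s\<close>. This lets the middle layer hold the one-hot code of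
  \<open>P\<close> together with the unary code of \<open>s\<close>, the latter by comparing \<open>a \<cdot> x\<close> with the
  \<open>P\<close>-dependent thresholds \<open>T (P r + q)\<close>. The next layer stores \<open>x (P r + s)\<close> as row
  \<open>P\<close> of an \<open>r \<times> D\<close> array, node \<open>(p, d)\<close> testing \<open>2 [p = P] + x (p r + s) ! d \<ge> 3\<close>,
  and the output layer takes the OR of every column.\<close>

definition unary_code :: "nat \<Rightarrow> nat \<Rightarrow> bool list" where
  "unary_code r s = map (\<lambda>k. k \<le> s) [0..<r]"

definition one_hot :: "nat \<Rightarrow> nat \<Rightarrow> bool list" where
  "one_hot r p = map (\<lambda>k. k = p) [0..<r]"

definition backward_diff :: "(nat \<Rightarrow> int) \<Rightarrow> nat \<Rightarrow> int" where
  "backward_diff h k = h k - (if k = 0 then 0 else h (k - 1))"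

definition join_weights ::
  "nat \<Rightarrow> (nat \<Rightarrow> int) \<Rightarrow> (nat \<Rightarrow> int) \<Rightarrow> nat \<Rightarrow> int" where
  "join_weights k v w m = (if m < k then v m else w (m - k))"

lemma sum_backward_diff: "(\<Sum>k\<le>s. backward_diff h k) = h s"
  by (induction s) (simp_all add: backward_diff_def)

lemma bdot_cong: "(\<And>k. k < length u \<Longrightarrow> v k = w k) \<Longrightarrow> bdot v u = bdot w u"
  unfolding bdot_def by simp

lemma bdot_append: "bdot w (u @ v) = bdot w u + bdot (\<lambda>k. w (length u + k)) v"
proof -
  have split: "(\<Sum>i<m + k. f i) = (\<Sum>i<m. f i) + (\<Sum>i<k. f (m + i))"
    for m k and f :: "nat \<Rightarrow> int"
    by (induction k) auto
  show ?thesis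
    unfolding bdot_def by (simp add: split nth_append)
qed

lemma bdot_join_weights:
  assumes "length u = k"
  shows "bdot (join_weights k v w) (u @ u') = bdot v u + bdot w u'"
proof -
  have "bdot (join_weights k v w) u = bdot v u"
    using assms by (intro bdot_cong) (simp add: join_weights_def)
  then show ?thesis
    using assms by (simp add: bdot_append join_weights_def)
qed

lemma bdot_one_hot:
  assumes "p < r"
  shows "bdot w (one_hot r p) = w p"
  using assms by (simp add: bdot_def one_hot_def bit_def if_distrib cong: if_cong)

lemma bdot_unary_code:
  assumes "s < r"
  shows "bdot w (unary_code r s) = (\<Sum>k\<le>s. w k)"
proof -
  have "{k \<in> {..<r}. k \<le> s} = {..s}"
    using assms by auto
  then show ?thesis
    by (simp add: bdot_def unary_code_def bit_def sum.inter_filter[symmetric] if_distrib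
        cong: if_cong)
qed

lemma bdot_backward_diff_unary_code:
  "s < r \<Longrightarrow> bdot (backward_diff h) (unary_code r s) = h s"
  by (simp add: bdot_unary_code sum_backward_diff)

lemma apply_layer_eq:
  "apply_layer (W, \<Theta>, m) u = map (\<lambda>j. \<Theta> j \<le> bdot (W j) u) [0..<m]"
  by (simp add: apply_layer_def threshold_fn_def)

fun stack_layers :: "layer \<Rightarrow> layer \<Rightarrow> layer" where
  "stack_layers (W, \<Theta>, m) (W', \<Theta>', m') =
     (\<lambda>j. if j < m then W j else W' (j - m),
      \<lambda>j. if j < m then \<Theta> j else \<Theta>' (j - m), m + m')"

lemma apply_stack_layers:
  "apply_layer (stack_layers l l') u = apply_layer l u @ apply_layer l' u"
proof -
  obtain W \<Theta> m W' \<Theta>' m' where "l = (W, \<Theta>, m)" "l' = (W', \<Theta>', m')"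
    by (cases l, cases l') auto
  then show ?thesis
    by (intro nth_equalityI) (auto simp: apply_layer_eq nth_append)
qed

definition identity_layer :: "nat \<Rightarrow> layer" where
  "identity_layer D = (\<lambda>j m. if m = j then 1 else 0, \<lambda>_. 1, D)"

lemma bdot_unit_weights:
  assumes "k < length u"
  shows "bdot (\<lambda>m. if m = k then 1 else 0) u = bit (u ! k)"
proof -
  have "(if m = k then 1 else 0) * bit (u ! m) = (if m = k then bit (u ! k) else 0)" for m
    by simp
  then show ?thesis
    using assms by (simp add: bdot_def)
qed

lemma apply_identity_layer: "apply_layer (identity_layer (length u)) u = u"
  by (rule nth_equalityI)
    (simp_all add: identity_layer_def apply_layer_eq bdot_unit_weights bit_def)

definition block_layer ::
  "(nat \<Rightarrow> int) \<Rightarrow> (nat \<Rightarrow> int) \<Rightarrow> nat \<Rightarrow> nat \<Rightarrow> layer" where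
  "block_layer a T r D = stack_layers (\<lambda>_. a, \<lambda>k. T (k * r), r) (identity_layer D)"

lemma apply_block_layer:
  assumes "strict_mono T" and "0 < r" and "bdot a x = T i" and "length x = D"
  shows "apply_layer (block_layer a T r D) x = unary_code r (i div r) @ x"
proof -
  have "(T (k * r) \<le> T i) = (k \<le> i div r)" for k
    using assms by (simp add: strict_mono_less_eq less_eq_div_iff_mult_less_eq)
  moreover have "apply_layer (identity_layer D) x = x"
    using apply_identity_layer assms(4) by blast
  ultimately show ?thesis
    using assms(3)
    by (simp add: block_layer_def apply_stack_layers apply_layer_eq unary_code_def)
qed

definition code_layer :: "(nat \<Rightarrow> int) \<Rightarrow> (nat \<Rightarrow> int) \<Rightarrow> nat \<Rightarrow> layer" where
  "code_layer a T r = stack_layers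
     (\<lambda>p. join_weights r (backward_diff (\<lambda>m. bit (m = p))) (\<lambda>_. 0), \<lambda>_. 1, r)
     (\<lambda>q. join_weights r (backward_diff (\<lambda>m. - T (m * r + q))) a, \<lambda>_. 0, r)"

lemma apply_code_layer:
  assumes "strict_mono T" and "i < r * r" and "bdot a x = T i"
  shows "apply_layer (code_layer a T r) (unary_code r (i div r) @ x)
    = one_hot r (i div r) @ unary_code r (i mod r)"
proof -
  have block: "i div r < r"
    using assms(2) by (cases "r = 0") (simp_all add: div_less_iff_less_mult)
  have bdot_zero: "bdot (\<lambda>_. 0) x = 0"
    by (simp add: bdot_def)
  have "(0 \<le> T i - T (i div r * r + q)) = (q \<le> i mod r)" for q
    using strict_mono_less_eq[OF assms(1), of "i div r * r + q" i] div_mult_mod_eq[of i r]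
    by linarith
  moreover have "length (unary_code r (i div r)) = r"
    by (simp add: unary_code_def)
  ultimately show ?thesis
    using block assms(3) unfolding code_layer_def apply_stack_layers apply_layer_eq
    by (simp add: bdot_join_weights bdot_zero bdot_backward_diff_unary_code)
      (simp add: unary_code_def one_hot_def bit_def)
qed

definition masked_rows :: "nat \<Rightarrow> nat \<Rightarrow> nat \<Rightarrow> bool list \<Rightarrow> bool list" where
  "masked_rows r D p y = map (\<lambda>j. j div D = p \<and> y ! (j mod D)) [0..<r * D]"

definition lookup_layer :: "(nat \<Rightarrow> bool list) \<Rightarrow> nat \<Rightarrow> nat \<Rightarrow> layer" where
  "lookup_layer xs r D =
     (\<lambda>j. join_weights r (\<lambda>m. if m = j div D then 2 else 0)
            (backward_diff (\<lambda>s. bit (xs (j div D * r + s) ! (j mod D)))),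
      \<lambda>_. 3, r * D)"

lemma apply_lookup_layer:
  assumes "p < r" and "s < r"
  shows "apply_layer (lookup_layer xs r D) (one_hot r p @ unary_code r s)
    = masked_rows r D p (xs (p * r + s))"
proof -
  have "length (one_hot r p) = r"
    by (simp add: one_hot_def)
  then show ?thesis
    using assms unfolding lookup_layer_def apply_layer_eq masked_rows_def
    by (simp add: bdot_join_weights bdot_one_hot bdot_backward_diff_unary_code bit_def)
qed

definition column_or_layer :: "nat \<Rightarrow> layer" where
  "column_or_layer D = (\<lambda>d j. if j mod D = d then 1 else 0, \<lambda>_. 1, D)"

lemma apply_column_or_layer:
  assumes "p < r" and "length y = D"
  shows "apply_layer (column_or_layer D) (masked_rows r D p y) = y"
proof (rule nth_equalityI)
  fix d
  assume "d < length (apply_layer (column_or_layer D) (masked_rows r D p y))"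
  then have "d < D"
    by (simp add: column_or_layer_def apply_layer_eq)
  have select: "(if j mod D = d then 1 else 0) * bit (j div D = p \<and> y ! (j mod D))
      = (if j = p * D + d then bit (y ! d) else 0)" for j
  proof (cases "j = p * D + d")
    case False
    then have "\<not> (j mod D = d \<and> j div D = p)"
      using div_mult_mod_eq[of j D] by auto
    then show ?thesis
      using False by (auto simp: bit_def)
  qed (use \<open>d < D\<close> in \<open>simp add: bit_def\<close>)
  have "p * D + d < Suc p * D"
    using \<open>d < D\<close> by simp
  also have "\<dots> \<le> r * D"
    using assms(1) by (intro mult_right_mono) auto
  finally have "p * D + d < r * D" .
  then have "bdot (\<lambda>j. if j mod D = d then 1 else 0) (masked_rows r D p y) = bit (y ! d)"
    by (simp add: masked_rows_def bdot_def select)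
  then show "apply_layer (column_or_layer D) (masked_rows r D p y) ! d = y ! d"
    using \<open>d < D\<close> by (simp add: column_or_layer_def apply_layer_eq bit_def)
qed (simp add: assms column_or_layer_def apply_layer_eq)

lemma le_ceiling_sqrt_squared: "n \<le> nat \<lceil>sqrt (real n)\<rceil> * nat \<lceil>sqrt (real n)\<rceil>"
proof -
  have "real n = sqrt (real n) * sqrt (real n)"
    by simp
  also have "\<dots> \<le> of_int \<lceil>sqrt (real n)\<rceil> * of_int \<lceil>sqrt (real n)\<rceil>"
    by (intro mult_mono) (auto intro: less_le_trans[of _ 0])
  also have "\<dots> = real (nat \<lceil>sqrt (real n)\<rceil> * nat \<lceil>sqrt (real n)\<rceil>)"
    by simp
  finally show ?thesis
    by linarith
qed

lemma strict_mono_extension: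
  fixes t :: "nat \<Rightarrow> int"
  assumes "\<forall>i j. i < j \<and> j < n \<longrightarrow> t i < t j"
  obtains T where "strict_mono T" and "\<forall>i<n. T i = t i"
proof
  define T where "T j = t (min j (n - 1)) + int (j - (n - 1))" for j
  show "\<forall>i<n. T i = t i"
    by (simp add: T_def)
  show "strict_mono T"
    unfolding strict_mono_Suc_iff
  proof
    fix j
    show "T j < T (Suc j)"
      using assms by (cases "Suc j < n") (auto simp: T_def)
  qed
qed

definition autoencoder_net ::
  "(nat \<Rightarrow> int) \<Rightarrow> (nat \<Rightarrow> int) \<Rightarrow> (nat \<Rightarrow> bool list) \<Rightarrow> nat \<Rightarrow> nat \<Rightarrow> layer list" where
  "autoencoder_net a T xs r D =
     [block_layer a T r D, code_layer a T r, lookup_layer xs r D, column_or_layer D]"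

lemma autoencoder_net_layer_sizes:
  "map layer_size (autoencoder_net a T xs r D) = [r + D, 2 * r, r * D, D]"
  by (simp add: autoencoder_net_def layer_size_def block_layer_def code_layer_def
      lookup_layer_def column_or_layer_def identity_layer_def)

lemma autoencoder_net_encoder:
  assumes "strict_mono T" and "i < r * r" and "bdot a x = T i" and "length x = D"
  shows "encoder (autoencoder_net a T xs r D) 3 x = one_hot r (i div r) @ unary_code r (i mod r)"
proof -
  have "0 < r"
    using assms(2) by (cases r) auto
  then show ?thesis
    using apply_block_layer[OF assms(1) _ assms(3,4)] apply_code_layer[OF assms(1-3)]
    by (simp add: autoencoder_net_def encoder_def net_eval_def)
qed

lemma autoencoder_net_decoder:
  assumes "p < r" and "s < r" and "length (xs (p * r + s)) = D"
  shows "decoder (autoencoder_net a T xs r D) 3 (one_hot r p @ unary_code r s) = xs (p * r + s)"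
  using apply_lookup_layer[OF assms(1,2)] apply_column_or_layer[OF assms(1,3)]
  by (simp add: autoencoder_net_def decoder_def net_eval_def)

theorem theorem19:
  fixes n D r :: nat and xs :: "nat \<Rightarrow> bool list" and a :: "nat \<Rightarrow> int"
  assumes "n \<ge> 1" and "D \<ge> 1"
    and "r = nat \<lceil>sqrt (real n)\<rceil>"
    and "\<forall>i<n. length (xs i) = D"
    and "inj_on xs {..<n}"
    and "\<forall>i j. i < j \<and> j < n \<longrightarrow> bdot a (xs i) < bdot a (xs j)"
  shows "\<exists>N :: layer list. map layer_size N = [r + D, 2 * r, r * D, D]
           \<and> perfect_autoencoder N 3 (xs ` {..<n})"
proof -
  have "n \<le> r * r"
    using assms(3) le_ceiling_sqrt_squared by simp
  obtain T where T: "strict_mono T" and t: "\<forall>i<n. T i = bdot a (xs i)"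
    using strict_mono_extension[OF assms(6)] by blast
  let ?N = "autoencoder_net a T xs r D"
  have "decoder ?N 3 (encoder ?N 3 (xs i)) = xs i" if "i < n" for i
  proof -
    have "i < r * r"
      using that \<open>n \<le> r * r\<close> by simp
    then have "0 < r"
      by (cases r) auto
    then have "i div r < r" and "i mod r < r"
      using \<open>i < r * r\<close> by (simp_all add: div_less_iff_less_mult)
    then show ?thesis
      using autoencoder_net_encoder[OF T \<open>i < r * r\<close>]
        autoencoder_net_decoder[of "i div r" r "i mod r"] that t assms(4)
      by simp
  qed
  then show ?thesis
    using autoencoder_net_layer_sizes unfolding perfect_autoencoder_def by blast
qed

end
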